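(* Let $q$ be a prime power and suppose there exists a linear $(2,t_o,s,q)$-AONT with $2\le t_o$. Then \[ s\le \max\{\,1+(t_o-2)(q+1),\; 2+(t_o-1)(q-1)\,\}.\]
   Context: A linear $(t_i,t_o,s,q)$-AONT is given by an invertible $s\times s$ matrix $M$ over $\mathbb{F}_q$ defining the map $\mathbf{x}\mapsto\mathbf{y}=\mathbf{x}M^{-1}$ on row vectors of $\mathbb{F}_q^s$, such that for every set $I$ of $t_i$ input coordinates and every set $J$ of $s-t_o$ output coordinates, the pair $((x_i)_{i\in I},(y_j)_{j\in J})$ takes every value in $\mathbb{F}_q^{t_i+s-t_o}$ equally often as $\mathbf{x}$ ranges over $\mathbb{F}_q^s$. Equivalently, $M$ is invertible and every $t_o\times t_i$ submatrix of $M$ has rank $t_i$. *)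

theory Defs
  imports "Jordan_Normal_Form.DL_Rank" "Jordan_Normal_Form.DL_Submatrix"
begin

text \<open>A linear (t_i, t_o, s, q)-AONT over the finite field 'a (with q = CARD('a)):
  an invertible s x s matrix M such that every t_o x t_i submatrix of M
  (rows I, columns J, |I| = t_o, |J| = t_i) has rank t_i.\<close>

definition linear_AONT :: "nat \<Rightarrow> nat \<Rightarrow> nat \<Rightarrow> 'a::field mat \<Rightarrow> bool" where
  "linear_AONT t_i t_o s M \<longleftrightarrow>
     1 \<le> t_i \<and> t_i \<le> t_o \<and> t_o \<le> s \<and>
     M \<in> carrier_mat s s \<and> invertible_mat M \<and>
     (\<forall>I J. I \<subseteq> {..<s} \<longrightarrow> J \<subseteq> {..<s} \<longrightarrow> card I = t_o \<longrightarrow> card J = t_i \<longrightarrow>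
        vec_space.rank t_o (submatrix M I J) = t_i)"

end

theory Submission
  imports Defs
begin

text \<open>Fix two columns \<open>j\<^sub>1 \<noteq> j\<^sub>2\<close> and view the rows of \<open>M\<close> restricted to them as points
  of \<open>F\<^sup>2\<close>, \<open>F = GF(q)\<close>. Since every \<open>t\<^sub>o \<times> 2\<close> submatrix has rank 2, fewer than \<open>t\<^sub>o\<close> of
  these points lie on any line through the origin, and every point lies on one of the \<open>q + 1\<close>
  such lines. If some row vanishes in two columns, that row lies on all \<open>q + 1\<close> lines, giving
  \<open>s \<le> 1 + (q + 1)(t\<^sub>o - 2)\<close>. Otherwise the zero sets of the columns are pairwise disjoint, so
  (unless \<open>s \<le> 2\<close>) two columns contain at most one zero each; the two axes then carry at most
  two points and the remaining \<open>q - 1\<close> lines at most \<open>t\<^sub>o - 1\<close> each.\<close>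

lemma (in vec_space) non_distinct_cols_low_rank:
  assumes "A \<in> carrier_mat n nc" and "\<not> distinct (cols A)"
  shows "rank A < nc"
proof -
  obtain S where S: "maximal S (\<lambda>T. T \<subseteq> set (cols A) \<and> lin_indpt T)"
    using maximal_exists[of "\<lambda>T. T \<subseteq> set (cols A) \<and> lin_indpt T" "card (set (cols A))" "{}"]
    by (meson List.finite_set card_mono empty_iff empty_subsetI finite_lin_indpt2 rev_finite_subset)
  then have "card S \<le> card (set (cols A))"
    by (simp add: card_mono maximal_def)
  also have "\<dots> < nc"
    using assms card_length[of "cols A"] card_distinct[of "cols A"] by fastforce
  finally show ?thesis
    using rank_card_indpt[OF assms(1) S] by simp
qed

lemma (in vec_space) nontrivial_kernel_low_rank:
  assumes A: "A \<in> carrier_mat n nc"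
    and v: "v \<in> carrier_vec nc" "v \<noteq> 0\<^sub>v nc" "A *\<^sub>v v = 0\<^sub>v n"
  shows "rank A < nc"
proof (cases "distinct (cols A)")
  case True
  have "rank A \<noteq> nc"
    using lin_depI[OF A v True] full_rank_lin_indpt[OF A _ True] by blast
  then show ?thesis
    using rank_le_nc[OF A] by simp
next
  case False
  then show ?thesis
    using non_distinct_cols_low_rank[OF A] by blast
qed

lemma pick_doubleton:
  assumes "j\<^sub>1 < (j\<^sub>2::nat)"
  shows "pick {j\<^sub>1, j\<^sub>2} 0 = j\<^sub>1" and "pick {j\<^sub>1, j\<^sub>2} 1 = j\<^sub>2"
proof -
  show j1: "pick {j\<^sub>1, j\<^sub>2} 0 = j\<^sub>1"
    using assms by (auto intro: Least_equality)
  show "pick {j\<^sub>1, j\<^sub>2} 1 = j\<^sub>2"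
    unfolding One_nat_def pick.simps(2) j1 using assms by (intro Least_equality) auto
qed

lemma submatrix_carrier_mat:
  assumes "A \<in> carrier_mat nr nc" and "I \<subseteq> {..<nr}" and "J \<subseteq> {..<nc}"
  shows "submatrix A I J \<in> carrier_mat (card I) (card J)"
proof -
  have rows: "{i. i < dim_row A \<and> i \<in> I} = I" and cols: "{j. j < dim_col A \<and> j \<in> J} = J"
    using assms by auto
  show ?thesis
    by (rule carrier_matI) (simp_all only: dim_submatrix rows cols)
qed

lemma submatrix_doubleton_mult_vec:
  assumes A: "A \<in> carrier_mat nr nc" and I: "I \<subseteq> {..<nr}" and j: "j\<^sub>1 < j\<^sub>2" "j\<^sub>2 < nc"
    and r: "r < card I"
  shows "(submatrix A I {j\<^sub>1, j\<^sub>2} *\<^sub>v vec 2 (\<lambda>k. if k = 0 then a else b)) $ r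
           = A $$ (pick I r, j\<^sub>1) * a + A $$ (pick I r, j\<^sub>2) * b"
proof -
  let ?S = "submatrix A I {j\<^sub>1, j\<^sub>2}"
  have S: "?S \<in> carrier_mat (card I) 2"
    using submatrix_carrier_mat[OF A I, of "{j\<^sub>1, j\<^sub>2}"] j by (simp add: numeral_2_eq_2)
  have "(?S *\<^sub>v vec 2 (\<lambda>k. if k = 0 then a else b)) $ r = ?S $$ (r, 0) * a + ?S $$ (r, 1) * b"
    using S r by (simp add: scalar_prod_def numeral_2_eq_2)
  also have "\<dots> = A $$ (pick I r, j\<^sub>1) * a + A $$ (pick I r, j\<^sub>2) * b"
    using S r dim_submatrix[of A I "{j\<^sub>1, j\<^sub>2}"] pick_doubleton[OF j(1)]
    by (simp add: submatrix_index)
  finally show ?thesis .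
qed

definition comb_zero_rows :: "'a::semiring_0 mat \<Rightarrow> 'a \<Rightarrow> nat \<Rightarrow> 'a \<Rightarrow> nat \<Rightarrow> nat set" where
  "comb_zero_rows M a j\<^sub>1 b j\<^sub>2 = {i. i < dim_row M \<and> a * M $$ (i, j\<^sub>1) + b * M $$ (i, j\<^sub>2) = 0}"

definition zero_rows :: "'a::zero mat \<Rightarrow> nat \<Rightarrow> nat set" where
  "zero_rows M j = {i. i < dim_row M \<and> M $$ (i, j) = 0}"

lemma finite_comb_zero_rows [simp]: "finite (comb_zero_rows M a j\<^sub>1 b j\<^sub>2)"
  unfolding comb_zero_rows_def by simp

lemma finite_zero_rows [simp]: "finite (zero_rows M j)"
  unfolding zero_rows_def by simp

lemma comb_zero_rows_swap: "comb_zero_rows M a j\<^sub>1 b j\<^sub>2 = comb_zero_rows M b j\<^sub>2 a j\<^sub>1"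
  unfolding comb_zero_rows_def by (simp add: add.commute)

lemma zero_rows_eq_comb_zero_rows:
  fixes M :: "'a::semiring_1 mat"
  shows "zero_rows M j = comb_zero_rows M 1 j 0 j'"
  unfolding zero_rows_def comb_zero_rows_def by simp

lemma rows_covered_by_lines:
  fixes M :: "'a::field mat"
  shows "{..<dim_row M} \<subseteq> zero_rows M j\<^sub>1 \<union> (\<Union>c. comb_zero_rows M c j\<^sub>1 (-1) j\<^sub>2)"
proof
  fix i assume i: "i \<in> {..<dim_row M}"
  show "i \<in> zero_rows M j\<^sub>1 \<union> (\<Union>c. comb_zero_rows M c j\<^sub>1 (-1) j\<^sub>2)"
  proof (cases "M $$ (i, j\<^sub>1) = 0")
    case True
    then show ?thesis using i by (simp add: zero_rows_def)
  next
    case False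
    then have "i \<in> comb_zero_rows M (M $$ (i, j\<^sub>2) / M $$ (i, j\<^sub>1)) j\<^sub>1 (-1) j\<^sub>2"
      using i by (simp add: comb_zero_rows_def)
    then show ?thesis by blast
  qed
qed

lemma comb_zero_rows_vertical_line:
  fixes M :: "'a::ring_1 mat"
  shows "comb_zero_rows M 0 j\<^sub>1 (-1) j\<^sub>2 = zero_rows M j\<^sub>2"
  unfolding zero_rows_def comb_zero_rows_def by simp

lemma linear_AONT_2_comb_zero_rows_card_less_ordered:
  fixes M :: "'a::field mat"
  assumes AONT: "linear_AONT 2 t s M" and j: "j\<^sub>1 < j\<^sub>2" "j\<^sub>2 < s" and ab: "a \<noteq> 0 \<or> b \<noteq> 0"
  shows "card (comb_zero_rows M a j\<^sub>1 b j\<^sub>2) < t"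
proof (rule ccontr)
  interpret V: vec_space "TYPE('a)" t .
  have M: "M \<in> carrier_mat s s" and rank: "\<And>I J. I \<subseteq> {..<s} \<Longrightarrow> J \<subseteq> {..<s} \<Longrightarrow>
      card I = t \<Longrightarrow> card J = 2 \<Longrightarrow> V.rank (submatrix M I J) = 2"
    using AONT unfolding linear_AONT_def by auto
  assume "\<not> card (comb_zero_rows M a j\<^sub>1 b j\<^sub>2) < t"
  then obtain I where I: "I \<subseteq> comb_zero_rows M a j\<^sub>1 b j\<^sub>2" "card I = t"
    by (meson not_less obtain_subset_with_card_n)
  have Is: "I \<subseteq> {..<s}"
    using I(1) M by (auto simp: comb_zero_rows_def)
  define S where "S = submatrix M I {j\<^sub>1, j\<^sub>2}"
  define v :: "'a vec" where "v = vec 2 (\<lambda>k. if k = 0 then a else b)"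
  have S: "S \<in> carrier_mat t 2"
    using submatrix_carrier_mat[OF M Is, of "{j\<^sub>1, j\<^sub>2}"] j I(2) by (simp add: S_def numeral_2_eq_2)
  have v: "v \<in> carrier_vec 2"
    by (simp add: v_def)
  have "v \<noteq> 0\<^sub>v 2"
  proof
    assume "v = 0\<^sub>v 2"
    then have "v $ 0 = 0" "v $ 1 = 0" by auto
    with ab show False by (simp add: v_def)
  qed
  moreover have "S *\<^sub>v v = 0\<^sub>v t"
  proof (rule eq_vecI)
    fix r assume "r < dim_vec (0\<^sub>v t)"
    then have r: "r < card I" using I(2) by simp
    have "pick I r \<in> comb_zero_rows M a j\<^sub>1 b j\<^sub>2"
      using pick_in_set_le[OF r] I(1) by blast
    then show "(S *\<^sub>v v) $ r = 0\<^sub>v t $ r"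
      using submatrix_doubleton_mult_vec[OF M Is j r] r I(2)
      by (simp add: S_def v_def comb_zero_rows_def mult.commute)
  qed (use S in simp)
  ultimately have "V.rank S < 2"
    by (rule V.nontrivial_kernel_low_rank[OF S v])
  moreover have "V.rank S = 2"
    using rank[OF Is _ I(2)] j by (simp add: S_def)
  ultimately show False by simp
qed

lemma linear_AONT_2_comb_zero_rows_card_less:
  fixes M :: "'a::field mat"
  assumes "linear_AONT 2 t s M" and "j\<^sub>1 < s" "j\<^sub>2 < s" "j\<^sub>1 \<noteq> j\<^sub>2" and "a \<noteq> 0 \<or> b \<noteq> 0"
  shows "card (comb_zero_rows M a j\<^sub>1 b j\<^sub>2) < t"
proof (cases "j\<^sub>1 < j\<^sub>2")
  case True
  then show ?thesis
    using linear_AONT_2_comb_zero_rows_card_less_ordered assms by blast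
next
  case False
  then have "j\<^sub>2 < j\<^sub>1" using assms(4) by simp
  then show ?thesis
    using linear_AONT_2_comb_zero_rows_card_less_ordered[of t s M j\<^sub>2 j\<^sub>1 b a] assms
    by (auto simp: comb_zero_rows_swap)
qed

lemma linear_AONT_2_zero_rows_card_less:
  fixes M :: "'a::field mat"
  assumes "linear_AONT 2 t s M" and "j\<^sub>1 < s" "j\<^sub>2 < s" "j\<^sub>1 \<noteq> j\<^sub>2"
  shows "card (zero_rows M j\<^sub>1) < t"
  unfolding zero_rows_eq_comb_zero_rows[of M j\<^sub>1 j\<^sub>2]
  using linear_AONT_2_comb_zero_rows_card_less[OF assms] by simp

lemma linear_AONT_2_card_le_common_zero:
  fixes M :: "'a::{finite,field} mat"
  assumes AONT: "linear_AONT 2 t s M" and j: "j\<^sub>1 < s" "j\<^sub>2 < s" "j\<^sub>1 \<noteq> j\<^sub>2"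
    and i\<^sub>0: "i\<^sub>0 \<in> zero_rows M j\<^sub>1" "i\<^sub>0 \<in> zero_rows M j\<^sub>2"
  shows "s \<le> 1 + (t - 2) * (card (UNIV :: 'a set) + 1)"
proof -
  let ?L = "\<lambda>c. comb_zero_rows M c j\<^sub>1 (-1) j\<^sub>2"
  have M: "dim_row M = s"
    using AONT unfolding linear_AONT_def by auto
  have remove_i\<^sub>0: "card (X - {i\<^sub>0}) \<le> t - 2" if "i\<^sub>0 \<in> X" "card X < t" for X
    using that card_Diff_singleton[OF that(1)] by linarith
  have on_lines: "\<And>c. i\<^sub>0 \<in> ?L c"
    using i\<^sub>0 by (auto simp: zero_rows_def comb_zero_rows_def)
  have small: "card (zero_rows M j\<^sub>1 - {i\<^sub>0}) \<le> t - 2" "\<And>c. card (?L c - {i\<^sub>0}) \<le> t - 2"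
    using remove_i\<^sub>0[OF i\<^sub>0(1) linear_AONT_2_zero_rows_card_less[OF AONT j]]
      remove_i\<^sub>0[OF on_lines linear_AONT_2_comb_zero_rows_card_less[OF AONT j]] by simp_all
  have "i\<^sub>0 < s"
    using i\<^sub>0(1) M by (simp add: zero_rows_def)
  then have "s - 1 = card ({..<s} - {i\<^sub>0})"
    by simp
  also have "\<dots> \<le> card ((zero_rows M j\<^sub>1 - {i\<^sub>0}) \<union> (\<Union>c. ?L c - {i\<^sub>0}))"
    using rows_covered_by_lines[of M j\<^sub>1 j\<^sub>2] M by (intro card_mono) auto
  also have "\<dots> \<le> card (zero_rows M j\<^sub>1 - {i\<^sub>0}) + card (\<Union>c. ?L c - {i\<^sub>0})"
    by (rule card_Un_le)
  also have "\<dots> \<le> card (zero_rows M j\<^sub>1 - {i\<^sub>0}) + (\<Sum>c\<in>UNIV. card (?L c - {i\<^sub>0}))"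
    by (intro add_left_mono card_UN_le) simp
  also have "\<dots> \<le> (t - 2) + (\<Sum>c\<in>(UNIV :: 'a set). t - 2)"
    using small by (intro add_mono sum_mono)
  also have "\<dots> = (t - 2) * (card (UNIV :: 'a set) + 1)"
    by simp
  finally show ?thesis
    by linarith
qed

lemma linear_AONT_2_card_le_sparse_cols:
  fixes M :: "'a::{finite,field} mat"
  assumes AONT: "linear_AONT 2 t s M" and j: "j\<^sub>1 < s" "j\<^sub>2 < s" "j\<^sub>1 \<noteq> j\<^sub>2"
    and sparse: "card (zero_rows M j\<^sub>1) \<le> 1" "card (zero_rows M j\<^sub>2) \<le> 1"
  shows "s \<le> 2 + (t - 1) * (card (UNIV :: 'a set) - 1)"
proof -
  let ?L = "\<lambda>c. comb_zero_rows M c j\<^sub>1 (-1) j\<^sub>2"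
  let ?U = "\<Union>c\<in>UNIV - {0}. ?L c"
  have M: "dim_row M = s"
    using AONT unfolding linear_AONT_def by auto
  have "(\<Union>c. ?L c) = zero_rows M j\<^sub>2 \<union> ?U"
    unfolding comb_zero_rows_vertical_line[of M j\<^sub>1 j\<^sub>2, symmetric] by blast
  then have cover: "{..<s} \<subseteq> zero_rows M j\<^sub>1 \<union> zero_rows M j\<^sub>2 \<union> ?U"
    using rows_covered_by_lines[of M j\<^sub>1 j\<^sub>2] unfolding M by blast
  have lines: "card (?L c) \<le> t - 1" for c
    using linear_AONT_2_comb_zero_rows_card_less[OF AONT j, of c "-1"] by simp
  have "s = card {..<s}"
    by simp
  also have "\<dots> \<le> card (zero_rows M j\<^sub>1 \<union> zero_rows M j\<^sub>2 \<union> ?U)"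
    by (rule card_mono[OF _ cover]) simp
  also have "\<dots> \<le> card (zero_rows M j\<^sub>1 \<union> zero_rows M j\<^sub>2) + card ?U"
    by (rule card_Un_le)
  also have "\<dots> \<le> card (zero_rows M j\<^sub>1) + card (zero_rows M j\<^sub>2) + (\<Sum>c\<in>UNIV - {0}. card (?L c))"
    by (intro add_mono card_Un_le card_UN_le) simp
  also have "\<dots> \<le> 1 + 1 + (\<Sum>c\<in>UNIV - {0::'a}. t - 1)"
    using sparse lines by (intro add_mono sum_mono)
  also have "\<dots> = 2 + (t - 1) * (card (UNIV :: 'a set) - 1)"
    by (simp add: card_Diff_singleton mult.commute)
  finally show ?thesis .
qed

lemma two_small_members_if_disjoint_family:
  assumes disj: "disjoint_family_on Z {..<n}" and sub: "\<And>j. j < n \<Longrightarrow> Z j \<subseteq> A"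
    and A: "finite A" "card A \<le> n" and n: "2 < n"
  obtains j\<^sub>1 j\<^sub>2 where "j\<^sub>1 < n" "j\<^sub>2 < n" "j\<^sub>1 \<noteq> j\<^sub>2" "card (Z j\<^sub>1) \<le> 1" "card (Z j\<^sub>2) \<le> 1"
proof -
  define G where "G = {j \<in> {..<n}. card (Z j) \<le> 1}"
  have G: "finite G" "G \<subseteq> {..<n}"
    by (auto simp: G_def)
  have "2 \<le> card G"
  proof (rule ccontr)
    assume "\<not> 2 \<le> card G"
    have fin: "finite (Z j)" if "j < n" for j
      using sub[OF that] A(1) by (rule finite_subset)
    have "2 * (n - card G) = (\<Sum>j\<in>{..<n} - G. 2)"
      by (simp add: card_Diff_subset[OF G])
    also have "\<dots> \<le> (\<Sum>j\<in>{..<n} - G. card (Z j))"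
      by (intro sum_mono) (auto simp: G_def)
    also have "\<dots> \<le> (\<Sum>j<n. card (Z j))"
      by (intro sum_mono2) auto
    also have "\<dots> = card (\<Union>j<n. Z j)"
      using disj fin by (intro card_UN_disjoint[symmetric]) (auto simp: disjoint_family_on_def)
    also have "\<dots> \<le> card A"
      using sub A(1) by (intro card_mono) auto
    finally show False
      using A(2) n \<open>\<not> 2 \<le> card G\<close> by linarith
  qed
  then obtain G2 where "G2 \<subseteq> G" "card G2 = 2"
    by (metis obtain_subset_with_card_n)
  then obtain j\<^sub>1 j\<^sub>2 where "j\<^sub>1 \<in> G" "j\<^sub>2 \<in> G" "j\<^sub>1 \<noteq> j\<^sub>2"
    by (auto simp: card_2_iff)
  then show thesis
    using that by (auto simp: G_def)
qed

theorem mainTheorem17: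
  fixes M :: "'a::{finite,field} mat" and q s t_o :: nat
  assumes "card (UNIV :: 'a set) = q"
    and "linear_AONT 2 t_o s M"
    and "2 \<le> t_o"
  shows "s \<le> max (1 + (t_o - 2) * (q + 1)) (2 + (t_o - 1) * (q - 1))"
proof (cases "disjoint_family_on (zero_rows M) {..<s}")
  case False
  then obtain j\<^sub>1 j\<^sub>2 i where "j\<^sub>1 < s" "j\<^sub>2 < s" "j\<^sub>1 \<noteq> j\<^sub>2" "i \<in> zero_rows M j\<^sub>1" "i \<in> zero_rows M j\<^sub>2"
    unfolding disjoint_family_on_def by blast
  then have "s \<le> 1 + (t_o - 2) * (q + 1)"
    using linear_AONT_2_card_le_common_zero[OF assms(2)] assms(1) by blast
  then show ?thesis
    by simp
next
  case True
  have "s \<le> 2 + (t_o - 1) * (q - 1)"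
  proof (cases "s \<le> 2")
    case False
    have "dim_row M = s"
      using assms(2) unfolding linear_AONT_def by auto
    then have "\<And>j. j < s \<Longrightarrow> zero_rows M j \<subseteq> {..<s}"
      unfolding zero_rows_def by auto
    with True obtain j\<^sub>1 j\<^sub>2 where "j\<^sub>1 < s" "j\<^sub>2 < s" "j\<^sub>1 \<noteq> j\<^sub>2"
      "card (zero_rows M j\<^sub>1) \<le> 1" "card (zero_rows M j\<^sub>2) \<le> 1"
      by (rule two_small_members_if_disjoint_family) (use False in auto)
    then show ?thesis
      using linear_AONT_2_card_le_sparse_cols[OF assms(2)] assms(1) by blast
  qed simp
  then show ?thesis
    by simp
qed

end
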